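(* Let $\hat f$ be an estimator built from $Z_n$, and let $A$ be an attack with $x\in A(x)$ for all $x$. Assume $\mathbb E Y^2<\infty$ and the quantities below are finite. Define $T(\hat f)=\mathbb E\big[(\hat f(X)-Y)^2+\sup_{X'\in A(X)}(\hat f(X')-\hat f(X))^2\big]$ and $R_{A,2}(\hat f,f)=\mathbb E\sup_{X'\in A(X)}|\hat f(X')-f(X)|^2$, where expectations are over $Z_n$ and an independent test pair $(X,Y)$. Then $$\frac{T(\hat f)-\mathbb E|f(X)-Y|^2}{5}\le R_{A,2}(\hat f,f)\le2\big[T(\hat f)-\mathbb E|f(X)-Y|^2\big].$$
   Context: $(X,Y)$ is a random pair in $\mathbb R^d\times\mathbb R$, $Z_n$ is an i.i.d. sample of copies of $(X,Y)$ independent of $(X,Y)$, $f(x)=\mathbb E(Y\mid X=x)$, and an attack is a map $A$ assigning to each $x$ in the support $\Omega$ of $X$ a measurable set $A(x)\subseteq\Omega$. $T(\hat f)$ is the TRADES objective with squared loss and balancing parameter $1$. *)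

theory Defs
  imports "HOL-Probability.Probability"
begin

text \<open>D is the joint law of the test pair (X,Y) on R^d x R; S is the probability space
 carrying the training sample Z_n; an estimator is fh :: sample => R^d => real.\<close>

definition support_X :: "('a::metric_space \<times> real) measure \<Rightarrow> 'a set" where
  "support_X D = {x. \<forall>e>0. measure D (fst -` ball x e \<inter> space D) > 0}"

definition regression_fn :: "('a::topological_space \<times> real) measure \<Rightarrow> ('a \<Rightarrow> real) \<Rightarrow> bool" where
  "regression_fn D f \<longleftrightarrow> f \<in> borel_measurable borel \<and>
     (AE z in D. f (fst z) = real_cond_exp D (vimage_algebra (space D) fst borel) snd z)"

text \<open>TRADES objective with squared loss and balancing parameter 1.\<close>
definition TRADES :: "'s measure \<Rightarrow> ('a \<times> real) measure \<Rightarrow> ('s \<Rightarrow> 'a \<Rightarrow> real)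
    \<Rightarrow> ('a \<Rightarrow> 'a set) \<Rightarrow> real" where
  "TRADES S D fh A = (integral\<^sup>L (S \<Otimes>\<^sub>M D) (\<lambda>w.
      (fh (fst w) (fst (snd w)) - snd (snd w))^2
      + (SUP x'\<in>A (fst (snd w)). (fh (fst w) x' - fh (fst w) (fst (snd w)))^2)))"

definition adv_risk :: "'s measure \<Rightarrow> ('a \<times> real) measure \<Rightarrow> ('s \<Rightarrow> 'a \<Rightarrow> real)
    \<Rightarrow> ('a \<Rightarrow> 'a set) \<Rightarrow> ('a \<Rightarrow> real) \<Rightarrow> real" where
  "adv_risk S D fh A f = (integral\<^sup>L (S \<Otimes>\<^sub>M D) (\<lambda>w.
      (SUP x'\<in>A (fst (snd w)). \<bar>fh (fst w) x' - f (fst (snd w))\<bar>^2)))"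

end

theory Submission
  imports Defs
begin

text \<open>
  Since \<open>f(X) = E(Y | X)\<close>, the residual \<open>Y - f(X)\<close> is orthogonal to every square-integrable
  function of \<open>X\<close>. The training sample is independent of the test pair, so this applies to
  \<open>fh(Z\<^sub>n, X) - f(X)\<close> and gives the Pythagorean identity
  \<open>E (fh(X) - Y)\<^sup>2 = E (fh(X) - f(X))\<^sup>2 + E (f(X) - Y)\<^sup>2\<close>. Hence
  \<open>T(fh) - E (f(X) - Y)\<^sup>2 = E [a + P]\<close> with \<open>a = (fh(X) - f(X))\<^sup>2\<close> and
  \<open>P = sup (fh(X') - fh(X))\<^sup>2\<close>, while \<open>R = E Q\<close> with \<open>Q = sup (fh(X') - f(X))\<^sup>2\<close>.
  As \<open>X \<in> A(X)\<close> almost surely, \<open>(u - v)\<^sup>2 \<le> 2u\<^sup>2 + 2v\<^sup>2\<close> gives pointwise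
  \<open>a \<le> Q\<close>, \<open>P \<le> 2Q + 2a \<le> 4Q\<close> and \<open>Q \<le> 2P + 2a\<close>; integrating yields both bounds.
\<close>

lemma square_diff_le: "((u::real) - v)^2 \<le> 2 * u^2 + 2 * v^2"
proof -
  have "0 \<le> (u + v)^2" by simp
  then show ?thesis by (simp add: power2_diff power2_sum)
qed

lemma square_integrable_mult:
  fixes a b :: "'x \<Rightarrow> real"
  assumes [measurable]: "a \<in> borel_measurable M" "b \<in> borel_measurable M"
    and "integrable M (\<lambda>x. (a x)^2)" "integrable M (\<lambda>x. (b x)^2)"
  shows "integrable M (\<lambda>x. a x * b x)"
proof (rule Bochner_Integration.integrable_bound)
  show "integrable M (\<lambda>x. (a x)^2 + (b x)^2)" using assms by auto
  show "AE x in M. norm (a x * b x) \<le> norm ((a x)^2 + (b x)^2)"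
  proof (intro AE_I2)
    fix x
    have "2 * \<bar>a x\<bar> * \<bar>b x\<bar> \<le> (a x)^2 + (b x)^2"
      using sum_squares_bound[of "\<bar>a x\<bar>" "\<bar>b x\<bar>"] by simp
    moreover have "0 \<le> \<bar>a x\<bar> * \<bar>b x\<bar>" by simp
    ultimately have "\<bar>a x\<bar> * \<bar>b x\<bar> \<le> (a x)^2 + (b x)^2" by linarith
    then show "norm (a x * b x) \<le> norm ((a x)^2 + (b x)^2)" by (simp add: abs_mult)
  qed
qed measurable

lemma square_integrable_diff:
  fixes a b :: "'x \<Rightarrow> real"
  assumes "a \<in> borel_measurable M" "b \<in> borel_measurable M"
    and "integrable M (\<lambda>x. (a x)^2)" "integrable M (\<lambda>x. (b x)^2)"
  shows "integrable M (\<lambda>x. (a x - b x)^2)"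
proof -
  have "integrable M (\<lambda>x. (a x)^2 - 2 * (a x * b x) + (b x)^2)"
    using assms square_integrable_mult[OF assms] by auto
  then show ?thesis by (simp add: power2_diff algebra_simps)
qed

lemma
  assumes "sets D = sets (borel :: ('a::topological_space \<times> 'b::topological_space) measure)"
  shows measurable_fst_borel_sets: "fst \<in> measurable D borel"
    and measurable_snd_borel_sets: "snd \<in> measurable D borel"
  unfolding measurable_cong_sets[OF assms refl]
  by (auto intro!: borel_measurable_continuous_onI continuous_intros)

lemma AE_fst_in_support_X:
  fixes D :: "('a::{metric_space,second_countable_topology} \<times> real) measure"
  assumes sets_D: "sets D = sets borel" and "finite_measure D"
  shows "AE z in D. fst z \<in> support_X D"
proof -
  interpret finite_measure D by fact
  note fst_measurable = measurable_fst_borel_sets[OF sets_D]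
  define F where "F = {ball x e | x e. e > 0 \<and> measure D (fst -` ball x e \<inter> space D) = 0}"
  obtain F' where F': "F' \<subseteq> F" "countable F'" "\<Union>F' = \<Union>F"
    using Lindelof[of F] unfolding F_def by auto
  show ?thesis
  proof (rule AE_I')
    show "(\<Union>b\<in>F'. fst -` b \<inter> space D) \<in> null_sets D"
    proof (rule null_sets_UN')
      fix b assume "b \<in> F'"
      then obtain x e where "b = ball x e" "measure D (fst -` ball x e \<inter> space D) = 0"
        using F' F_def by auto
      then show "fst -` b \<inter> space D \<in> null_sets D"
        using measurable_sets[OF fst_measurable] by (auto simp: emeasure_eq_measure null_sets_def)
    qed fact
    show "{z \<in> space D. fst z \<notin> support_X D} \<subseteq> (\<Union>b\<in>F'. fst -` b \<inter> space D)"
    proof clarify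
      fix z assume z: "z \<in> space D" "fst z \<notin> support_X D"
      then obtain e where "e > 0" "measure D (fst -` ball (fst z) e \<inter> space D) = 0"
        unfolding support_X_def by (auto simp: not_less measure_le_0_iff)
      then have "fst z \<in> \<Union>F'"
        unfolding F'(3) F_def by (auto intro!: exI[of _ "ball (fst z) e"])
      then show "z \<in> (\<Union>b\<in>F'. fst -` b \<inter> space D)" using z by auto
    qed
  qed
qed

lemma (in prob_space) distr_pair_snd:
  assumes "sigma_finite_measure N"
  shows "distr (M \<Otimes>\<^sub>M N) N snd = N"
proof (intro measure_eqI)
  interpret N: sigma_finite_measure N by fact
  fix B assume B: "B \<in> sets (distr (M \<Otimes>\<^sub>M N) N snd)"
  then have "emeasure (distr (M \<Otimes>\<^sub>M N) N snd) B = emeasure (M \<Otimes>\<^sub>M N) (space M \<times> B)"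
    by (auto simp: emeasure_distr space_pair_measure dest: sets.sets_into_space
        intro!: arg_cong2[where f=emeasure])
  with B show "emeasure (distr (M \<Otimes>\<^sub>M N) N snd) B = emeasure N B"
    by (simp add: N.emeasure_pair_measure_Times emeasure_space_1)
qed simp

lemma (in prob_space)
  fixes k :: "'b \<Rightarrow> 'c::{banach, second_countable_topology}"
  assumes "sigma_finite_measure N" "integrable N k"
  shows integrable_pair_snd: "integrable (M \<Otimes>\<^sub>M N) (\<lambda>w. k (snd w))"
    and integral_pair_snd: "(\<integral>w. k (snd w) \<partial>(M \<Otimes>\<^sub>M N)) = integral\<^sup>L N k"
  using integrable_distr_eq[of snd "M \<Otimes>\<^sub>M N" N k] integral_distr[of snd "M \<Otimes>\<^sub>M N" N k]
    distr_pair_snd[OF assms(1)] assms(2)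
  by auto

lemma (in prob_space) AE_pair_snd:
  assumes "sigma_finite_measure N" "AE z in N. P z"
  shows "AE w in M \<Otimes>\<^sub>M N. P (snd w)"
proof (rule AE_distrD[OF measurable_snd])
  show "AE z in distr (M \<Otimes>\<^sub>M N) N snd. P z"
    unfolding distr_pair_snd[OF assms(1)] by fact
qed

lemma integral_le_mult_integral_AE:
  fixes u v :: "'x \<Rightarrow> real"
  assumes "integrable M u" "integrable M v" "AE x in M. u x \<le> c * v x"
  shows "integral\<^sup>L M u \<le> c * integral\<^sup>L M v"
  using integral_mono_AE[of M u "\<lambda>x. c * v x"] assms by simp

lemma sup_square_deviation_bounds:
  fixes g :: "'b \<Rightarrow> real"
  assumes x: "x \<in> B"
    and bdd_P: "bdd_above ((\<lambda>x'. (g x' - g x)^2) ` B)"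
    and bdd_Q: "bdd_above ((\<lambda>x'. \<bar>g x' - c\<bar>^2) ` B)"
  shows "(g x - c)^2 + (SUP x'\<in>B. (g x' - g x)^2) \<le> 5 * (SUP x'\<in>B. \<bar>g x' - c\<bar>^2)"
    and "(SUP x'\<in>B. \<bar>g x' - c\<bar>^2) \<le> 2 * ((g x - c)^2 + (SUP x'\<in>B. (g x' - g x)^2))"
proof -
  define P where "P = (SUP x'\<in>B. (g x' - g x)^2)"
  define Q where "Q = (SUP x'\<in>B. \<bar>g x' - c\<bar>^2)"
  have B: "B \<noteq> {}" using x by auto
  have P_upper: "(g x' - g x)^2 \<le> P" if "x' \<in> B" for x'
    unfolding P_def using cSUP_upper[OF that bdd_P] .
  have Q_upper: "(g x' - c)^2 \<le> Q" if "x' \<in> B" for x'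
    unfolding Q_def using cSUP_upper[OF that bdd_Q] by simp
  have a_le_Q: "(g x - c)^2 \<le> Q" using Q_upper[OF x] .
  have "P \<le> 4 * Q" unfolding P_def
  proof (rule cSUP_least[OF B])
    fix x' assume "x' \<in> B"
    have "(g x' - g x)^2 = ((g x' - c) - (g x - c))^2" by simp
    also have "\<dots> \<le> 2 * (g x' - c)^2 + 2 * (g x - c)^2" by (rule square_diff_le)
    also have "\<dots> \<le> 4 * Q" using Q_upper[OF \<open>x' \<in> B\<close>] a_le_Q by simp
    finally show "(g x' - g x)^2 \<le> 4 * Q" .
  qed
  with a_le_Q show "(g x - c)^2 + P \<le> 5 * Q" by simp
  show "Q \<le> 2 * ((g x - c)^2 + P)" unfolding Q_def
  proof (rule cSUP_least[OF B])
    fix x' assume "x' \<in> B"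
    have "\<bar>g x' - c\<bar>^2 = ((g x' - g x) - (c - g x))^2" by simp
    also have "\<dots> \<le> 2 * (g x' - g x)^2 + 2 * (c - g x)^2" by (rule square_diff_le)
    also have "\<dots> \<le> 2 * ((g x - c)^2 + P)"
      using P_upper[OF \<open>x' \<in> B\<close>] by (simp add: power2_commute)
    finally show "\<bar>g x' - c\<bar>^2 \<le> 2 * ((g x - c)^2 + P)" .
  qed
qed

locale regression_model = prob_space D
  for D :: "('a::topological_space \<times> real) measure" +
  fixes f :: "'a \<Rightarrow> real"
  assumes sets_eq_borel: "sets D = sets borel"
    and regression_fn: "regression_fn D f"
    and square_integrable_Y: "integrable D (\<lambda>z. (snd z)^2)"
begin

lemma measurable_X[measurable]: "fst \<in> measurable D borel"
  by (rule measurable_fst_borel_sets[OF sets_eq_borel])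

lemma measurable_Y[measurable]: "snd \<in> borel_measurable D"
  by (rule measurable_snd_borel_sets[OF sets_eq_borel])

lemma measurable_f[measurable]: "f \<in> borel_measurable borel"
  using regression_fn unfolding regression_fn_def by simp

lemma AE_f_eq_cond_exp:
  "AE z in D. f (fst z) = real_cond_exp D (vimage_algebra (space D) fst borel) snd z"
  using regression_fn unfolding regression_fn_def by simp

lemma sigma_finite_D: "sigma_finite_measure D"
  by unfold_locales

sublocale finite_measure_subalgebra D "vimage_algebra (space D) fst borel"
  by unfold_locales (simp add: subalgebra_def sets_image_in_sets)

lemma square_integrable_f: "integrable D (\<lambda>z. (f (fst z))^2)"
proof (rule Bochner_Integration.integrable_bound)
  let ?E = "real_cond_exp D (vimage_algebra (space D) fst borel)"
  show "integrable D (?E (\<lambda>z. (snd z)^2))"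
    using square_integrable_Y by auto
  have "integrable D snd"
    using square_integrable_imp_integrable[OF measurable_Y square_integrable_Y] .
  then have "AE z in D. (?E snd z)^2 \<le> ?E (\<lambda>z. (snd z)^2) z"
    using real_cond_exp_jensens_inequality(2)[of snd UNIV, where q=power2] square_integrable_Y
      convex_power2 by auto
  with AE_f_eq_cond_exp show "AE z in D. norm ((f (fst z))^2) \<le> norm (?E (\<lambda>z. (snd z)^2) z)"
    by eventually_elim auto
qed simp

lemma square_integrable_residual: "integrable D (\<lambda>z. (f (fst z) - snd z)^2)"
  by (rule square_integrable_diff) (use square_integrable_f square_integrable_Y in auto)

lemma residual_orthogonal:
  assumes [measurable]: "h \<in> borel_measurable borel"
    and h_square: "integrable D (\<lambda>z. (h (fst z))^2)"
  shows "(\<integral>z. h (fst z) * (f (fst z) - snd z) \<partial>D) = 0"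
proof -
  have hX: "(\<lambda>z. h (fst z)) \<in> borel_measurable (vimage_algebra (space D) fst borel)"
    by (rule measurable_comp[OF measurable_vimage_algebra1 assms(1), unfolded comp_def]) simp
  have hXY: "integrable D (\<lambda>z. h (fst z) * snd z)"
    by (rule square_integrable_mult) (use h_square square_integrable_Y in auto)
  have hXf: "integrable D (\<lambda>z. h (fst z) * f (fst z))"
    by (rule square_integrable_mult) (use h_square square_integrable_f in auto)
  have "(\<integral>z. h (fst z) * f (fst z) \<partial>D)
      = (\<integral>z. h (fst z) * real_cond_exp D (vimage_algebra (space D) fst borel) snd z \<partial>D)"
    using AE_f_eq_cond_exp by (intro integral_cong_AE) auto
  also have "\<dots> = (\<integral>z. h (fst z) * snd z \<partial>D)"
    by (rule real_cond_exp_intg(2)[OF hXY hX]) simp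
  finally show ?thesis
    using hXY hXf by (simp add: right_diff_distrib)
qed

lemma measurable_estimator_at_X:
  assumes "(\<lambda>(s, x). g s x) \<in> borel_measurable (S \<Otimes>\<^sub>M borel)"
  shows "(\<lambda>w. g (fst w) (fst (snd w))) \<in> borel_measurable (S \<Otimes>\<^sub>M D)"
proof -
  have "(\<lambda>w. (fst w, fst (snd w))) \<in> measurable (S \<Otimes>\<^sub>M D) (S \<Otimes>\<^sub>M borel)"
    by measurable
  from measurable_comp[OF this assms] show ?thesis by (simp add: comp_def)
qed

lemma residual_orthogonal_pair:
  assumes S: "prob_space S"
    and g: "(\<lambda>(s, x). g s x) \<in> borel_measurable (S \<Otimes>\<^sub>M borel)"
    and g_square: "integrable (S \<Otimes>\<^sub>M D) (\<lambda>w. (g (fst w) (fst (snd w)))^2)"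
  shows "(\<integral>w. g (fst w) (fst (snd w)) * (f (fst (snd w)) - snd (snd w)) \<partial>(S \<Otimes>\<^sub>M D)) = 0"
proof -
  interpret S: prob_space S by fact
  interpret pair_sigma_finite S D ..
  have "integrable (S \<Otimes>\<^sub>M D) (\<lambda>w. (f (fst (snd w)) - snd (snd w))^2)"
    by (rule S.integrable_pair_snd[OF sigma_finite_D square_integrable_residual])
  then have "integrable (S \<Otimes>\<^sub>M D) (\<lambda>w. g (fst w) (fst (snd w)) * (f (fst (snd w)) - snd (snd w)))"
    by (intro square_integrable_mult measurable_estimator_at_X[OF g] g_square) simp_all
  from integral_fst'[OF this]
  have "(\<integral>w. g (fst w) (fst (snd w)) * (f (fst (snd w)) - snd (snd w)) \<partial>(S \<Otimes>\<^sub>M D))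
      = (\<integral>s. (\<integral>z. g s (fst z) * (f (fst z) - snd z) \<partial>D) \<partial>S)"
    by simp
  also have "\<dots> = 0"
  proof (rule integral_eq_zero_AE)
    show "AE s in S. (\<integral>z. g s (fst z) * (f (fst z) - snd z) \<partial>D) = 0"
      using AE_integrable_fst'[OF g_square] AE_space
    proof eventually_elim
      case (elim s)
      have "(\<lambda>x. g s x) \<in> borel_measurable borel"
        using measurable_Pair2[OF g elim(2)] by simp
      with elim(1) show ?case by (intro residual_orthogonal) simp_all
    qed
  qed
  finally show ?thesis .
qed

lemma risk_decomposition:
  assumes S: "prob_space S"
    and fh: "(\<lambda>(s, x). fh s x) \<in> borel_measurable (S \<Otimes>\<^sub>M borel)"
    and fh_risk: "integrable (S \<Otimes>\<^sub>M D) (\<lambda>w. (fh (fst w) (fst (snd w)) - snd (snd w))^2)"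
  shows "integrable (S \<Otimes>\<^sub>M D) (\<lambda>w. (fh (fst w) (fst (snd w)) - f (fst (snd w)))^2)"
    and "(\<integral>w. (fh (fst w) (fst (snd w)) - snd (snd w))^2 \<partial>(S \<Otimes>\<^sub>M D))
       = (\<integral>w. (fh (fst w) (fst (snd w)) - f (fst (snd w)))^2 \<partial>(S \<Otimes>\<^sub>M D))
         + (\<integral>z. (f (fst z) - snd z)^2 \<partial>D)"
proof -
  interpret S: prob_space S by fact
  note D = sigma_finite_D
  have fh_diff: "(\<lambda>(s, x). fh s x - f x) \<in> borel_measurable (S \<Otimes>\<^sub>M borel)"
    using fh by measurable
  note [measurable] = measurable_estimator_at_X[OF fh]
  let ?M = "S \<Otimes>\<^sub>M D"
  let ?g = "\<lambda>w. fh (fst w) (fst (snd w)) - f (fst (snd w))"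
  let ?e = "\<lambda>w. f (fst (snd w)) - snd (snd w)"
  have e: "integrable ?M (\<lambda>w. (?e w)^2)"
    using S.integrable_pair_snd[OF D square_integrable_residual] by simp
  have "integrable ?M (\<lambda>w. (fh (fst w) (fst (snd w)))^2)"
    using square_integrable_diff[of "\<lambda>w. fh (fst w) (fst (snd w)) - snd (snd w)" ?M
        "\<lambda>w. - snd (snd w)"] fh_risk S.integrable_pair_snd[OF D square_integrable_Y]
    by simp
  then show g: "integrable ?M (\<lambda>w. (?g w)^2)"
    using S.integrable_pair_snd[OF D square_integrable_f] by (intro square_integrable_diff) auto
  have ge: "integrable ?M (\<lambda>w. ?g w * ?e w)"
    by (intro square_integrable_mult g e) auto
  have "(\<integral>w. (fh (fst w) (fst (snd w)) - snd (snd w))^2 \<partial>?M)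
      = (\<integral>w. (?g w)^2 + (?e w)^2 + 2 * (?g w * ?e w) \<partial>?M)"
    by (intro Bochner_Integration.integral_cong) (simp_all add: power2_eq_square algebra_simps)
  also have "\<dots> = (\<integral>w. (?g w)^2 \<partial>?M) + (\<integral>w. (?e w)^2 \<partial>?M) + 2 * (\<integral>w. ?g w * ?e w \<partial>?M)"
    using g e ge by simp
  also have "(\<integral>w. ?g w * ?e w \<partial>?M) = 0"
    using residual_orthogonal_pair[OF S fh_diff] g by simp
  also have "(\<integral>w. (?e w)^2 \<partial>?M) = (\<integral>z. (f (fst z) - snd z)^2 \<partial>D)"
    using S.integral_pair_snd[OF D square_integrable_residual] by simp
  finally show "(\<integral>w. (fh (fst w) (fst (snd w)) - snd (snd w))^2 \<partial>?M)
      = (\<integral>w. (?g w)^2 \<partial>?M) + (\<integral>z. (f (fst z) - snd z)^2 \<partial>D)"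
    by simp
qed


lemma TRADES_minus_Bayes_risk:
  assumes S: "prob_space S"
    and fh: "(\<lambda>(s, x). fh s x) \<in> borel_measurable (S \<Otimes>\<^sub>M borel)"
    and fh_risk: "integrable (S \<Otimes>\<^sub>M D) (\<lambda>w. (fh (fst w) (fst (snd w)) - snd (snd w))^2)"
    and P: "integrable (S \<Otimes>\<^sub>M D) P"
  shows "integral\<^sup>L (S \<Otimes>\<^sub>M D) (\<lambda>w. (fh (fst w) (fst (snd w)) - snd (snd w))^2 + P w)
           - (LINT z|D. \<bar>f (fst z) - snd z\<bar>^2)
       = (\<integral>w. (fh (fst w) (fst (snd w)) - f (fst (snd w)))^2 + P w \<partial>(S \<Otimes>\<^sub>M D))"
  using risk_decomposition[OF S fh fh_risk] fh_risk P by simp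

end

theorem mainTheorem13:
  fixes S :: "'s measure" and D :: "((real^'d) \<times> real) measure"
    and fh :: "'s \<Rightarrow> real^'d \<Rightarrow> real" and f :: "real^'d \<Rightarrow> real"
    and A :: "real^'d \<Rightarrow> (real^'d) set"
  assumes "prob_space S" and "prob_space D"
    and "sets D = sets borel"
    and "(\<lambda>(s, x). fh s x) \<in> borel_measurable (S \<Otimes>\<^sub>M borel)"
    and "integrable D (\<lambda>z. (snd z)^2)"
    and "regression_fn D f"
    and "\<forall>x\<in>support_X D. x \<in> A x \<and> A x \<subseteq> support_X D \<and> A x \<in> sets borel"
    and "integrable (S \<Otimes>\<^sub>M D) (\<lambda>w. (fh (fst w) (fst (snd w)) - snd (snd w))^2)"
    and "integrable (S \<Otimes>\<^sub>M D)
           (\<lambda>w. SUP x'\<in>A (fst (snd w)). (fh (fst w) x' - fh (fst w) (fst (snd w)))^2)"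
    and "integrable (S \<Otimes>\<^sub>M D)
           (\<lambda>w. SUP x'\<in>A (fst (snd w)). \<bar>fh (fst w) x' - f (fst (snd w))\<bar>^2)"
    and "AE w in S \<Otimes>\<^sub>M D.
           bdd_above ((\<lambda>x'. (fh (fst w) x' - fh (fst w) (fst (snd w)))^2) ` A (fst (snd w)))"
    and "AE w in S \<Otimes>\<^sub>M D.
           bdd_above ((\<lambda>x'. \<bar>fh (fst w) x' - f (fst (snd w))\<bar>^2) ` A (fst (snd w)))"
  shows "(TRADES S D fh A - (LINT z|D. \<bar>f (fst z) - snd z\<bar>^2)) / 5 \<le> adv_risk S D fh A f
       \<and> adv_risk S D fh A f \<le> 2 * (TRADES S D fh A - (LINT z|D. \<bar>f (fst z) - snd z\<bar>^2))"
proof -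
  interpret S: prob_space S by fact
  interpret regression_model D f
    using assms(2,3,5,6) by (simp add: regression_model_def regression_model_axioms_def)
  let ?M = "S \<Otimes>\<^sub>M D"
  define E where "E w = (fh (fst w) (fst (snd w)) - f (fst (snd w)))^2
      + (SUP x'\<in>A (fst (snd w)). (fh (fst w) x' - fh (fst w) (fst (snd w)))^2)"
    for w :: "'s \<times> (real^'d) \<times> real"
  define Q where "Q w = (SUP x'\<in>A (fst (snd w)). \<bar>fh (fst w) x' - f (fst (snd w))\<bar>^2)"
    for w :: "'s \<times> (real^'d) \<times> real"
  have E: "integrable ?M E"
    unfolding E_def using risk_decomposition(1)[OF assms(1,4,8)] assms(9) by simp
  have Q: "integrable ?M Q"
    unfolding Q_def using assms(10) .
  have excess: "TRADES S D fh A - (LINT z|D. \<bar>f (fst z) - snd z\<bar>^2) = integral\<^sup>L ?M E"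
    unfolding TRADES_def E_def using TRADES_minus_Bayes_risk[OF assms(1,4,8,9)] .
  have "AE w in ?M. fst (snd w) \<in> support_X D"
    by (rule S.AE_pair_snd[OF sigma_finite_D AE_fst_in_support_X[OF assms(3)]]) unfold_locales
  with assms(11,12) have pointwise: "AE w in ?M. E w \<le> 5 * Q w \<and> Q w \<le> 2 * E w"
  proof eventually_elim
    case (elim w)
    with assms(7) have "fst (snd w) \<in> A (fst (snd w))" by blast
    from sup_square_deviation_bounds[OF this elim(1,2)] show ?case
      unfolding E_def Q_def by simp
  qed
  have "integral\<^sup>L ?M E \<le> 5 * integral\<^sup>L ?M Q" "integral\<^sup>L ?M Q \<le> 2 * integral\<^sup>L ?M E"
    using pointwise by (auto intro!: integral_le_mult_integral_AE E Q elim: AE_mp)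
  then show ?thesis
    unfolding excess adv_risk_def Q_def[symmetric] by simp
qed

end
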